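(* Let $\mathbb{K}$ be an infinite field of characteristic zero, let $G$ be a bipartite graph on $n\ge 5$ vertices and $w(G)$ its whiskered graph, on vertex set $[2n]$. Write $J(w(G))=(x_{i_{1,1}}\cdots x_{i_{1,r_1}},\dots,x_{i_{s,1}}\cdots x_{i_{s,r_s}})\subset\mathbb{K}[x_1,\dots,x_{2n}]$ and let $\Delta=\langle\{i_{1,1},\dots,i_{1,r_1}\},\dots,\{i_{s,1},\dots,i_{s,r_s}\}\rangle$. Then $A(\Delta)$ is a level monomial algebra that fails the strong Lefschetz property.
   Context: The whiskered graph $w(G)$ of a graph $G$ with vertices $v_1,\dots,v_n$ has vertex set $\{v_1,\dots,v_n,w_1,\dots,w_n\}$ and edge set $E(G)\cup\{v_iw_i:i\in[n]\}$. For a graph $H$, its facet ideal is $\mathcal{F}(H)=(x_ix_j:\{i,j\}\in E(H))$; if $\mathcal{F}(H)=\bigcap_k (x_{i_{k,1}},\dots,x_{i_{k,r_k}})$ is its primary decomposition, the cover ideal is $J(H)=(x_{i_{k,1}}\cdots x_{i_{k,r_k}}:k)$. $\langle F_1,\dots,F_s\rangle$ denotes the simplicial complex with facets $F_1,\dots,F_s$. For a simplicial complex $\Delta$ on $[N]$, with $S=\mathbb{K}[x_1,\dots,x_N]$, $\mathcal{N}(\Delta)=(x_\tau:\tau\subseteq[N],\tau\notin\Delta)$ and $A(\Delta)=S/(\mathcal{N}(\Delta)+(x_1^2,\dots,x_N^2))$. A graded artinian algebra $A$ with top nonzero degree $d$ is level if its socle $\{f: fA_1=0\}$ equals $A_d$.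 $A$ has the strong Lefschetz property if for a general linear form $L$ all maps $\times L^j:A_i\to A_{i+j}$ have full rank. *)

theory Defs
  imports "HOL-Library.Poly_Mapping"
begin

(* Polynomials in countably many variables x_0, x_1, ... over 'k:
   coefficient functions on monomials (exponent vectors). *)
type_synonym 'k mpoly = "(nat \<Rightarrow>\<^sub>0 nat) \<Rightarrow>\<^sub>0 'k"

definition var :: "nat \<Rightarrow> 'k::comm_ring_1 mpoly" where
  "var i = Poly_Mapping.single (Poly_Mapping.single i 1) 1"

definition xmon :: "nat set \<Rightarrow> 'k::comm_ring_1 mpoly" where
  "xmon \<tau> = (\<Prod>i\<in>\<tau>. var i)"

definition mdeg :: "(nat \<Rightarrow>\<^sub>0 nat) \<Rightarrow> nat" where
  "mdeg m = (\<Sum>i\<in>Poly_Mapping.keys m. Poly_Mapping.lookup m i)"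

definition polyring :: "nat \<Rightarrow> 'k::comm_ring_1 mpoly set" where
  "polyring N = {p. \<forall>m\<in>Poly_Mapping.keys p. Poly_Mapping.keys m \<subseteq> {1..N}}"

(* homogeneous of degree d (0 is homogeneous of every degree) *)
definition homog :: "nat \<Rightarrow> 'k::comm_ring_1 mpoly \<Rightarrow> bool" where
  "homog d p \<longleftrightarrow> (\<forall>m\<in>Poly_Mapping.keys p. mdeg m = d)"

inductive_set ideal_gen :: "'k::comm_ring_1 mpoly set \<Rightarrow> 'k mpoly set \<Rightarrow> 'k mpoly set"
  for R Gs where
  zero: "0 \<in> ideal_gen R Gs"
| gen: "g \<in> Gs \<Longrightarrow> g \<in> ideal_gen R Gs"
| add: "a \<in> ideal_gen R Gs \<Longrightarrow> b \<in> ideal_gen R Gs \<Longrightarrow> a + b \<in> ideal_gen R Gs"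
| mult: "a \<in> ideal_gen R Gs \<Longrightarrow> r \<in> R \<Longrightarrow> r * a \<in> ideal_gen R Gs"

definition simple_graph :: "nat set \<Rightarrow> nat set set \<Rightarrow> bool" where
  "simple_graph V E \<longleftrightarrow> (\<forall>e\<in>E. \<exists>a b. e = {a, b} \<and> a \<noteq> b \<and> a \<in> V \<and> b \<in> V)"

definition bipartite :: "nat set \<Rightarrow> nat set set \<Rightarrow> bool" where
  "bipartite V E \<longleftrightarrow> (\<exists>A\<subseteq>V. \<forall>e\<in>E. card (e \<inter> A) = 1)"

(* whiskered graph of a graph on {1..n}: vertices v_i = i, w_i = n + i *)
definition whisker_edges :: "nat \<Rightarrow> nat set set \<Rightarrow> nat set set" where
  "whisker_edges n E = E \<union> {{i, n + i} | i. i \<in> {1..n}}"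

definition vertex_cover :: "nat set \<Rightarrow> nat set set \<Rightarrow> nat set \<Rightarrow> bool" where
  "vertex_cover V E C \<longleftrightarrow> C \<subseteq> V \<and> (\<forall>e\<in>E. e \<inter> C \<noteq> {})"

definition min_vertex_cover :: "nat set \<Rightarrow> nat set set \<Rightarrow> nat set \<Rightarrow> bool" where
  "min_vertex_cover V E C \<longleftrightarrow> vertex_cover V E C \<and> (\<forall>D. D \<subset> C \<longrightarrow> \<not> vertex_cover V E D)"

(* Supports of the minimal monomial generators of the cover ideal J(H):
   the primes in the (irredundant) primary decomposition of the edge ideal F(H)
   are (x_i : i \<in> C) for C a minimal vertex cover of H. *)
definition cover_ideal_supports :: "nat set \<Rightarrow> nat set set \<Rightarrow> nat set set" where
  "cover_ideal_supports V E = {C. min_vertex_cover V E C}"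

definition gen_complex :: "nat set set \<Rightarrow> nat set set" where
  "gen_complex Fs = {\<tau>. \<exists>F\<in>Fs. \<tau> \<subseteq> F}"

definition defining_ideal :: "nat \<Rightarrow> nat set set \<Rightarrow> 'k::comm_ring_1 mpoly set" where
  "defining_ideal N \<Delta> = ideal_gen (polyring N)
     ({xmon \<tau> | \<tau>. \<tau> \<subseteq> {1..N} \<and> \<tau> \<notin> \<Delta>} \<union> {var i ^ 2 | i. i \<in> {1..N}})"

(* A = S/I is level: with d the top nonzero degree, the socle {f : f A_1 = 0} equals A_d *)
definition level_quot :: "nat \<Rightarrow> 'k::comm_ring_1 mpoly set \<Rightarrow> bool" where
  "level_quot N I \<longleftrightarrow> (\<exists>d.
     (\<exists>g\<in>polyring N. homog d g \<and> g \<notin> I) \<and>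
     (\<forall>e>d. \<forall>g\<in>polyring N. homog e g \<longrightarrow> g \<in> I) \<and>
     (\<forall>f\<in>polyring N. (\<forall>i\<in>{1..N}. var i * f \<in> I) \<longleftrightarrow>
                       (\<exists>g\<in>polyring N. homog d g \<and> f - g \<in> I)))"

(* multiplication by L^j from A_i to A_{i+j} has full rank (injective or surjective) *)
definition full_rank_mult :: "nat \<Rightarrow> 'k::comm_ring_1 mpoly set \<Rightarrow> 'k mpoly \<Rightarrow> nat \<Rightarrow> nat \<Rightarrow> bool" where
  "full_rank_mult N I L i j \<longleftrightarrow>
     (\<forall>f\<in>polyring N. homog i f \<longrightarrow> L ^ j * f \<in> I \<longrightarrow> f \<in> I) \<or>
     (\<forall>g\<in>polyring N. homog (i + j) g \<longrightarrow>
        (\<exists>f\<in>polyring N. homog i f \<and> g - L ^ j * f \<in> I))"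

definition strong_lefschetz :: "nat \<Rightarrow> 'k::comm_ring_1 mpoly set \<Rightarrow> bool" where
  "strong_lefschetz N I \<longleftrightarrow>
     (\<exists>L\<in>polyring N. homog 1 L \<and> (\<forall>i j. full_rank_mult N I L i j))"

end

theory Submission
  imports Defs "HOL.Vector_Spaces"
begin

text \<open>
  Every minimal vertex cover of the whiskered graph contains exactly one endpoint of each whisker,
  so all facets of \<open>\<Delta>\<close> have \<open>n\<close> elements. In the algebra of a pure complex an element
  annihilated by all variables agrees with its top-degree part, hence \<open>A(\<Delta>)\<close> is level.

  Multiplication by \<open>L^(n - 1)\<close> from \<open>A\<^sub>1\<close> to \<open>A\<^sub>n\<close> has full rank for no linear form \<open>L\<close>.
  It is not surjective: \<open>A\<^sub>1\<close> has dimension \<open>2n\<close>, whereas the facets of \<open>\<Delta>\<close>, one for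
  each vertex cover of \<open>G\<close>, give at least \<open>2^|A| + 2^|B| - 1 \<ge> 2n + 1\<close> independent
  monomials of degree \<open>n\<close> when \<open>G\<close> has bipartition \<open>A, B\<close> and \<open>n \<ge> 5\<close>.
  It is not injective: \<open>L\<close> is the sum of the forms \<open>\<ell>\<^sub>k\<close> in \<open>x\<^sub>k\<close> and \<open>x\<^sub>n\<^sub>+\<^sub>k\<close>, which square
  to zero in \<open>A(\<Delta>)\<close> because \<open>{k, n + k}\<close> is a non-face, and for square-zero summands
  \<open>\<ell>\<^sub>k L^(n - 1) = (n - 1)! \<ell>\<^sub>1 \<cdots> \<ell>\<^sub>n\<close> does not depend on \<open>k\<close>, so \<open>\<ell>\<^sub>k - \<ell>\<^sub>m\<close> lies in the kernel.
  Neither argument uses that the characteristic is zero.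
\<close>

section \<open>Monomials and homogeneous polynomials\<close>

abbreviation lookup where "lookup \<equiv> Poly_Mapping.lookup"
abbreviation single where "single \<equiv> Poly_Mapping.single"
abbreviation keys where "keys \<equiv> Poly_Mapping.keys"

lemma lookup_minus_nat: "lookup (a - b) i = lookup a i - lookup (b :: 'a \<Rightarrow>\<^sub>0 nat) i"
  by transfer simp

lemma keys_add_nat: "keys (a + b) = keys a \<union> keys (b :: 'a \<Rightarrow>\<^sub>0 nat)"
  by (auto simp: in_keys_iff lookup_add)

lemma single_one_eq_iff [simp]: "single i (1::'b::zero_neq_one) = single j 1 \<longleftrightarrow> i = j"
  by (metis lookup_single_eq lookup_single_not_eq one_neq_zero)

text \<open>The simplifier rewrites \<open>1 :: nat\<close> to \<open>Suc 0\<close>, so exponent vectors need this form.\<close>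

lemmas single_Suc_0_eq_iff [simp] = single_one_eq_iff[where 'b = nat, unfolded One_nat_def]

lemma lookup_single_mult:
  "lookup (single (a::'a \<Rightarrow>\<^sub>0 nat) (c::'k::comm_ring_1) * p) (a + m) = c * lookup p m"
proof -
  have "lookup (single a c * p) (a + m)
     = (\<Sum>l. lookup (single a c) l * (\<Sum>q. lookup p q when a + m = l + q))"
    by (rule lookup_mult)
  also have "\<dots> = c * (\<Sum>q. lookup p q when m = q)"
    by (simp add: lookup_single when_mult)
  finally show ?thesis by simp
qed

lemma lookup_const_mult: "lookup (single 0 (c::'k::comm_ring_1) * (p::'k mpoly)) m = c * lookup p m"
  using lookup_single_mult[of 0 c p m] by simp

lemma lookup_var_mult: "lookup (var i * (p :: 'k::comm_ring_1 mpoly)) (single i 1 + m) = lookup p m"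
  unfolding var_def using lookup_single_mult[of "single i 1" 1 p m] by simp

lemma mpoly_eq_sum_monomials: "p = (\<Sum>m\<in>keys p. single m (lookup p m))"
  by (rule poly_mapping_eqI) (auto simp: lookup_sum lookup_single when_def in_keys_iff)

definition sqfree_exponent :: "nat set \<Rightarrow> (nat \<Rightarrow>\<^sub>0 nat)" where
  "sqfree_exponent \<tau> = (\<Sum>i\<in>\<tau>. single i 1)"

lemma lookup_sqfree_exponent:
  "finite \<tau> \<Longrightarrow> lookup (sqfree_exponent \<tau>) i = (if i \<in> \<tau> then 1 else 0)"
  unfolding sqfree_exponent_def by (simp add: lookup_sum lookup_single when_def)

lemma keys_sqfree_exponent: "finite \<tau> \<Longrightarrow> keys (sqfree_exponent \<tau>) = \<tau>"
  by (auto simp: in_keys_iff lookup_sqfree_exponent split: if_splits)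

lemma xmon_eq_single: "finite \<tau> \<Longrightarrow> (xmon \<tau> :: 'k::comm_ring_1 mpoly) = single (sqfree_exponent \<tau>) 1"
proof (induction \<tau> rule: finite_induct)
  case empty
  then show ?case by (simp add: xmon_def sqfree_exponent_def)
next
  case (insert i \<tau>)
  then show ?case by (simp add: xmon_def sqfree_exponent_def var_def mult_single)
qed

lemma var_power2: "(var i :: 'k::comm_ring_1 mpoly) ^ 2 = single (single i 2) 1"
  by (simp add: var_def power2_eq_square mult_single single_add[symmetric] numeral_2_eq_2)

lemma mdeg_eq_sum: "finite K \<Longrightarrow> keys m \<subseteq> K \<Longrightarrow> mdeg m = (\<Sum>i\<in>K. lookup m i)"
  unfolding mdeg_def by (rule sum.mono_neutral_left) (auto simp: in_keys_iff)

lemma mdeg_add: "mdeg (a + b) = mdeg a + mdeg b"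
proof -
  let ?K = "keys a \<union> keys b"
  have "mdeg (a + b) = (\<Sum>i\<in>?K. lookup (a + b) i)"
    by (rule mdeg_eq_sum) (auto simp: keys_add_nat)
  also have "\<dots> = (\<Sum>i\<in>?K. lookup a i) + (\<Sum>i\<in>?K. lookup b i)"
    by (simp add: lookup_add sum.distrib)
  finally show ?thesis by (simp add: mdeg_eq_sum[symmetric])
qed

lemma mdeg_single [simp]: "mdeg (single i k) = k"
  by (simp add: mdeg_def)

lemma mdeg_sqfree: "(\<And>i. lookup m i \<le> 1) \<Longrightarrow> mdeg m = card (keys m)"
  unfolding mdeg_def by (metis (mono_tags, lifting) One_nat_def card_eq_sum in_keys_iff
      le_antisym less_one not_less sum.cong)

lemma mdeg_sqfree_exponent: "finite \<tau> \<Longrightarrow> mdeg (sqfree_exponent \<tau>) = card \<tau>"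
  by (subst mdeg_sqfree) (auto simp: lookup_sqfree_exponent keys_sqfree_exponent)

lemma mdeg_eq_1_iff: "mdeg m = 1 \<longleftrightarrow> (\<exists>i. m = single i 1)"
proof
  assume deg: "mdeg m = 1"
  then obtain i where i: "i \<in> keys m" by (force simp: mdeg_def)
  have "lookup m i + (\<Sum>j\<in>keys m - {i}. lookup m j) = 1"
    using deg i unfolding mdeg_def by (simp add: sum.remove)
  moreover have "lookup m i \<ge> 1" using i by (simp add: in_keys_iff)
  ultimately have "lookup m i = 1" and "(\<Sum>j\<in>keys m - {i}. lookup m j) = 0" by linarith+
  then have "m = single i 1"
    by (intro poly_mapping_eqI) (auto simp: lookup_single when_def in_keys_iff)
  then show "\<exists>i. m = single i 1" ..
qed auto

lemma polyring_add: "p \<in> polyring N \<Longrightarrow> q \<in> polyring N \<Longrightarrow> p + q \<in> polyring N"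
  unfolding polyring_def using keys_add[of p q] by blast

lemma polyring_mult: "p \<in> polyring N \<Longrightarrow> q \<in> polyring N \<Longrightarrow> p * q \<in> polyring N"
  unfolding polyring_def using keys_mult[of p q] by (fastforce simp: keys_add_nat)

lemma polyring_uminus: "p \<in> polyring N \<Longrightarrow> - p \<in> polyring N"
  by (simp add: polyring_def)

lemma polyring_diff: "p \<in> polyring N \<Longrightarrow> q \<in> polyring N \<Longrightarrow> p - q \<in> polyring N"
  unfolding diff_conv_add_uminus by (intro polyring_add polyring_uminus)

lemma polyring_single: "keys m \<subseteq> {1..N} \<Longrightarrow> single m c \<in> polyring N"
  by (simp add: polyring_def)

lemma polyring_zero: "0 \<in> polyring N"
  by (simp add: polyring_def)

lemma polyring_one: "1 \<in> polyring N"
  by (simp add: polyring_def)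

lemma polyring_var: "i \<in> {1..N} \<Longrightarrow> var i \<in> polyring N"
  unfolding var_def by (rule polyring_single) simp

lemma polyring_power: "p \<in> polyring N \<Longrightarrow> p ^ r \<in> polyring N"
  by (induction r) (simp_all add: polyring_one polyring_mult)

lemma polyring_sum: "(\<And>x. x \<in> A \<Longrightarrow> f x \<in> polyring N) \<Longrightarrow> sum f A \<in> polyring N"
  by (induction A rule: infinite_finite_induct) (simp_all add: polyring_zero polyring_add)

lemma polyring_of_nat: "(of_nat r :: 'k::comm_ring_1 mpoly) \<in> polyring N"
  by (induction r) (simp_all add: polyring_zero polyring_one polyring_add)

lemma homog_mult: "homog a p \<Longrightarrow> homog b q \<Longrightarrow> homog (a + b) (p * q)"
  unfolding homog_def using keys_mult[of p q] by (fastforce simp: mdeg_add)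

lemma homog_add: "homog a p \<Longrightarrow> homog a q \<Longrightarrow> homog a (p + q)"
  unfolding homog_def using keys_add[of p q] by blast

lemma homog_diff: "homog a p \<Longrightarrow> homog a q \<Longrightarrow> homog a (p - q)"
  unfolding homog_def using keys_diff[of p q] by blast

lemma homog_single: "mdeg m = a \<Longrightarrow> homog a (single m c)"
  by (simp add: homog_def)

lemma homog_var: "homog 1 (var i)"
  unfolding var_def by (rule homog_single) simp

lemma homog_sum: "(\<And>x. x \<in> A \<Longrightarrow> homog a (f x)) \<Longrightarrow> homog a (sum f A)"
  by (induction A rule: infinite_finite_induct) (simp_all add: homog_add, simp_all add: homog_def)

lemma linear_form_eq_sum_vars:
  fixes L :: "'k::comm_ring_1 mpoly"
  assumes "L \<in> polyring N" and "homog 1 L"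
  shows "L = (\<Sum>i\<in>{1..N}. single (single i 1) (lookup L (single i 1)))"
proof (rule poly_mapping_eqI)
  fix m :: "nat \<Rightarrow>\<^sub>0 nat"
  have sum_eq: "lookup (\<Sum>i\<in>{1..N}. single (single i 1) (lookup L (single i 1))) m
      = (\<Sum>i\<in>{1..N}. if single i 1 = m then lookup L (single i 1) else 0)"
    by (simp only: lookup_sum lookup_single when_def)
  show "lookup L m = lookup (\<Sum>i\<in>{1..N}. single (single i 1) (lookup L (single i 1))) m"
  proof (cases "\<exists>j\<in>{1..N}. m = single j 1")
    case True
    then obtain j where j: "j \<in> {1..N}" "m = single j 1" by blast
    have "(\<Sum>i\<in>{1..N}. if single i 1 = m then lookup L (single i 1) else 0)
        = (\<Sum>i\<in>{1..N}. if i = j then lookup L m else 0)"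
      by (rule sum.cong) (simp_all add: j(2))
    then show ?thesis using sum_eq j(1) by simp
  next
    case False
    have "lookup L m = 0"
    proof (rule ccontr)
      assume "lookup L m \<noteq> 0"
      then have "m \<in> keys L" by (simp add: in_keys_iff)
      with assms have "mdeg m = 1" and keys: "keys m \<subseteq> {1..N}"
        unfolding homog_def polyring_def by blast+
      then obtain j where "m = single j 1" using mdeg_eq_1_iff by blast
      with False keys show False by simp
    qed
    moreover have "(\<Sum>i\<in>{1..N}. if single i 1 = m then lookup L (single i 1) else 0) = 0"
      by (rule sum.neutral) (use False in auto)
    ultimately show ?thesis using sum_eq by simp
  qed
qed

section \<open>Face monomials and the defining ideal\<close>

lemma ideal_gen_uminus: "a \<in> ideal_gen (polyring N) Gs \<Longrightarrow> - a \<in> ideal_gen (polyring N) Gs"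
  using ideal_gen.mult[of a _ Gs "- 1"] by (simp add: polyring_uminus polyring_one)

lemma ideal_gen_diff:
  "a \<in> ideal_gen (polyring N) Gs \<Longrightarrow> b \<in> ideal_gen (polyring N) Gs \<Longrightarrow>
    a - b \<in> ideal_gen (polyring N) Gs"
  unfolding diff_conv_add_uminus by (intro ideal_gen.add ideal_gen_uminus)

lemma ideal_gen_sum: "(\<And>x. x \<in> A \<Longrightarrow> f x \<in> ideal_gen R Gs) \<Longrightarrow> sum f A \<in> ideal_gen R Gs"
  by (induction A rule: infinite_finite_induct) (simp_all add: ideal_gen.zero ideal_gen.add)

definition downward_closed :: "nat set set \<Rightarrow> bool" where
  "downward_closed \<Delta> \<longleftrightarrow> (\<forall>\<tau>\<in>\<Delta>. \<forall>\<sigma>\<subseteq>\<tau>. \<sigma> \<in> \<Delta>)"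

lemma downward_closed_gen_complex: "downward_closed (gen_complex Fs)"
  unfolding downward_closed_def gen_complex_def by blast

definition face_monomial :: "nat set set \<Rightarrow> (nat \<Rightarrow>\<^sub>0 nat) \<Rightarrow> bool" where
  "face_monomial \<Delta> m \<longleftrightarrow> (\<forall>i. lookup m i \<le> 1) \<and> keys m \<in> \<Delta>"

lemma face_monomial_add_right:
  "downward_closed \<Delta> \<Longrightarrow> face_monomial \<Delta> (a + b) \<Longrightarrow> face_monomial \<Delta> b"
  unfolding face_monomial_def downward_closed_def
  by (metis keys_add_nat le_add2 lookup_add order_trans sup_ge2)

lemma defining_ideal_avoids_face_monomials:
  assumes "downward_closed \<Delta>" and "p \<in> defining_ideal N \<Delta>" and "m \<in> keys p"
  shows "\<not> face_monomial \<Delta> m"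
  using assms(2,3) unfolding defining_ideal_def
proof (induction arbitrary: m rule: ideal_gen.induct)
  case (gen g)
  then consider \<tau> where "g = xmon \<tau>" "\<tau> \<subseteq> {1..N}" "\<tau> \<notin> \<Delta>" | i where "g = var i ^ 2" by blast
  then show ?case
  proof cases
    case 1
    then have "finite \<tau>" using finite_subset by blast
    with 1 gen.prems show ?thesis
      by (simp add: xmon_eq_single face_monomial_def keys_sqfree_exponent)
  next
    case 2
    with gen.prems show ?thesis by (auto simp: var_power2 face_monomial_def intro!: exI[of _ i])
  qed
next
  case (add a b)
  then show ?case using keys_add[of a b] by blast
next
  case (mult a r)
  then obtain x y where "m = x + y" "y \<in> keys a" using keys_mult[of r a] by blast
  with mult.IH show ?case using face_monomial_add_right[OF assms(1), of x y] by blast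
qed simp

lemma lookup_defining_ideal_face_monomial:
  "downward_closed \<Delta> \<Longrightarrow> p \<in> defining_ideal N \<Delta> \<Longrightarrow> face_monomial \<Delta> m \<Longrightarrow> lookup p m = 0"
  using defining_ideal_avoids_face_monomials by (metis in_keys_iff)

lemma single_in_defining_ideal:
  assumes keys: "keys m \<subseteq> {1..N}" and not_face: "\<not> face_monomial \<Delta> m"
  shows "single m c \<in> defining_ideal N \<Delta>"
proof (cases "\<exists>i. lookup m i \<ge> 2")
  case True
  then obtain i where i: "lookup m i \<ge> 2" by blast
  then have "i \<in> keys m" by (simp add: in_keys_iff)
  then have "i \<in> {1..N}" using keys by blast
  then have square: "var i ^ 2 \<in> defining_ideal N \<Delta>"
    unfolding defining_ideal_def by (intro ideal_gen.gen) blast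
  have "m = (m - single i 2) + single i 2"
    by (rule poly_mapping_eqI)
       (use i in \<open>auto simp: lookup_add lookup_minus_nat lookup_single when_def\<close>)
  then have "single m c = single (m - single i 2) c * var i ^ 2"
    by (metis var_power2 mult_single mult.right_neutral)
  moreover have "single (m - single i 2) c \<in> polyring N"
    by (rule polyring_single) (use keys in \<open>auto simp: in_keys_iff lookup_minus_nat\<close>)
  ultimately show ?thesis
    using ideal_gen.mult[OF square[unfolded defining_ideal_def]]
    unfolding defining_ideal_def by simp
next
  case False
  then have sqfree: "\<forall>i. lookup m i \<le> 1" by (simp add: not_le less_Suc_eq_le numeral_2_eq_2)
  with not_face have "xmon (keys m) \<in> defining_ideal N \<Delta>"
    unfolding defining_ideal_def face_monomial_def by (intro ideal_gen.gen) (use keys in blast)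
  then have "single 0 c * xmon (keys m) \<in> defining_ideal N \<Delta>"
    unfolding defining_ideal_def by (rule ideal_gen.mult) (simp add: polyring_single)
  moreover have "m = sqfree_exponent (keys m)"
    by (rule poly_mapping_eqI)
       (use sqfree in \<open>auto simp: lookup_sqfree_exponent in_keys_iff intro: le_antisym\<close>)
  then have "single m c = single 0 c * xmon (keys m)"
    by (simp add: xmon_eq_single mult_single)
  ultimately show ?thesis by simp
qed

lemma defining_idealI:
  assumes "p \<in> polyring N" and "\<And>m. m \<in> keys p \<Longrightarrow> \<not> face_monomial \<Delta> m"
  shows "p \<in> defining_ideal N \<Delta>"
proof -
  have "single m (lookup p m) \<in> defining_ideal N \<Delta>" if "m \<in> keys p" for m
    using assms that by (intro single_in_defining_ideal) (auto simp: polyring_def)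
  then have "(\<Sum>m\<in>keys p. single m (lookup p m)) \<in> defining_ideal N \<Delta>"
    unfolding defining_ideal_def by (rule ideal_gen_sum)
  then show ?thesis by (metis mpoly_eq_sum_monomials)
qed

definition monomial_restrict :: "((nat \<Rightarrow>\<^sub>0 nat) \<Rightarrow> bool) \<Rightarrow> 'k::comm_ring_1 mpoly \<Rightarrow> 'k mpoly" where
  "monomial_restrict P p = (\<Sum>m\<in>{m\<in>keys p. P m}. single m (lookup p m))"

lemma lookup_monomial_restrict:
  "lookup (monomial_restrict P p) m = (if P m then lookup p m else 0)"
  unfolding monomial_restrict_def by (auto simp: lookup_sum lookup_single when_def in_keys_iff)

lemma monomial_restrict_diff:
  "monomial_restrict P (p - q) = monomial_restrict P p - monomial_restrict P q"
  by (rule poly_mapping_eqI) (simp add: lookup_monomial_restrict lookup_minus)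

lemma monomial_restrict_sum:
  "monomial_restrict P (\<Sum>x\<in>A. f x) = (\<Sum>x\<in>A. monomial_restrict P (f x))"
  by (rule poly_mapping_eqI) (simp add: lookup_monomial_restrict lookup_sum sum.If_cases)

lemma monomial_restrict_const_mult:
  "monomial_restrict P (single 0 c * p) = single 0 c * monomial_restrict P p"
  by (rule poly_mapping_eqI) (simp add: lookup_monomial_restrict lookup_const_mult)

lemma monomial_restrict_single: "P m \<Longrightarrow> monomial_restrict P (single m c) = single m c"
  by (rule poly_mapping_eqI) (auto simp: lookup_monomial_restrict lookup_single when_def)

lemma homog_monomial_restrict_mdeg: "homog d (monomial_restrict (\<lambda>m. mdeg m = d) f)"
  unfolding monomial_restrict_def by (intro homog_sum homog_single) simp

lemma polyring_monomial_restrict: "f \<in> polyring N \<Longrightarrow> monomial_restrict P f \<in> polyring N"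
  unfolding monomial_restrict_def by (intro polyring_sum polyring_single) (auto simp: polyring_def)

lemma monomial_restrict_face_monomial_ideal:
  "downward_closed \<Delta> \<Longrightarrow> p \<in> defining_ideal N \<Delta> \<Longrightarrow> monomial_restrict (face_monomial \<Delta>) p = 0"
  by (rule poly_mapping_eqI)
     (simp add: lookup_monomial_restrict lookup_defining_ideal_face_monomial)

interpretation mpoly_vs: vector_space "\<lambda>c (p::'k::field mpoly). single 0 c * p"
  by unfold_locales (simp_all add: algebra_simps single_add mult_single)

lemma independent_monomials: "mpoly_vs.independent ((\<lambda>m. single m (1::'k::field)) ` M)"
  unfolding mpoly_vs.independent_explicit_module
proof (intro allI impI)
  fix t and u :: "'k mpoly \<Rightarrow> 'k" and v
  assume t: "finite t" "t \<subseteq> (\<lambda>m. single m 1) ` M"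
    and sum_zero: "(\<Sum>w\<in>t. single 0 (u w) * w) = 0" and v: "v \<in> t"
  obtain a where a: "v = single a 1" using v t(2) by blast
  have "0 = lookup (\<Sum>w\<in>t. single 0 (u w) * w) a" using sum_zero by simp
  also have "\<dots> = (\<Sum>w\<in>t. u w * lookup w a)"
    by (simp add: lookup_sum lookup_const_mult)
  also have "\<dots> = (\<Sum>w\<in>t. if w = v then u w else 0)"
    by (rule sum.cong) (use t(2) a in \<open>auto simp: lookup_single when_def\<close>)
  also have "\<dots> = u v" using t(1) v by simp
  finally show "u v = 0" by simp
qed

section \<open>Sums of square-zero elements\<close>

lemma square_zero_times_power:
  assumes "l \<in> polyring N" and "X \<in> polyring N" and "l * l \<in> ideal_gen (polyring N) Gs"
  shows "l * (l + X) ^ r - l * X ^ r \<in> ideal_gen (polyring N) Gs"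
proof (induction r)
  case (Suc r)
  have "l * (l + X) ^ Suc r - l * X ^ Suc r
      = (l + X) * (l * (l + X) ^ r - l * X ^ r) + X ^ r * (l * l)"
    by (simp add: algebra_simps)
  also have "\<dots> \<in> ideal_gen (polyring N) Gs"
    by (intro ideal_gen.add ideal_gen.mult Suc assms polyring_add polyring_power)
  finally show ?case .
qed (simp add: ideal_gen.zero)

lemma square_zero_binomial_power:
  assumes "l \<in> polyring N" and "X \<in> polyring N" and "l * l \<in> ideal_gen (polyring N) Gs"
  shows "(l + X) ^ Suc r - X ^ Suc r - of_nat (Suc r) * l * X ^ r \<in> ideal_gen (polyring N) Gs"
proof (induction r)
  case (Suc r)
  have "(l + X) ^ Suc (Suc r) - X ^ Suc (Suc r) - of_nat (Suc (Suc r)) * l * X ^ Suc r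
      = (l + X) * ((l + X) ^ Suc r - X ^ Suc r - of_nat (Suc r) * l * X ^ r)
        + (of_nat (Suc r) * X ^ r) * (l * l)"
    by (simp add: algebra_simps)
  also have "\<dots> \<in> ideal_gen (polyring N) Gs"
    by (intro ideal_gen.add ideal_gen.mult Suc assms polyring_add polyring_mult polyring_power
        polyring_of_nat)
  finally show ?case .
qed (simp add: ideal_gen.zero)

lemma square_zero_sum_power:
  assumes "finite S" and "\<And>k. k \<in> S \<Longrightarrow> l k \<in> polyring N \<and> l k * l k \<in> ideal_gen (polyring N) Gs"
  shows "(\<Sum>k\<in>S. l k) ^ Suc (card S) \<in> ideal_gen (polyring N) Gs"
  using assms
proof (induction S rule: finite_induct)
  case (insert k S)
  let ?I = "ideal_gen (polyring N) Gs" and ?M = "\<Sum>k\<in>S. l k" and ?r = "Suc (card S)"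
  have l: "l k \<in> polyring N" "l k * l k \<in> ?I" using insert by auto
  have M: "?M \<in> polyring N" using insert by (intro polyring_sum) auto
  have IH: "?M ^ ?r \<in> ?I" using insert by auto
  have "(l k + ?M) ^ Suc ?r = ((l k + ?M) ^ Suc ?r - ?M ^ Suc ?r - of_nat (Suc ?r) * l k * ?M ^ ?r)
      + ?M * ?M ^ ?r + (of_nat (Suc ?r) * l k) * ?M ^ ?r"
    by (simp add: algebra_simps)
  also have "\<dots> \<in> ?I"
    by (intro ideal_gen.add ideal_gen.mult square_zero_binomial_power l M IH
        polyring_mult polyring_of_nat)
  finally show ?case using insert by simp
qed (simp add: ideal_gen.zero)

lemma square_zero_times_sum_power:
  assumes "finite K" and "k \<in> K" and "m \<in> K" and "k \<noteq> m" and "card K = Suc (Suc r)"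
    and square_zero: "\<And>j. j \<in> K \<Longrightarrow> l j \<in> polyring N \<and> l j * l j \<in> ideal_gen (polyring N) Gs"
  shows "l k * (\<Sum>j\<in>K. l j) ^ Suc r - of_nat (Suc r) * (l k * l m) * (\<Sum>j\<in>K - {k, m}. l j) ^ r
    \<in> ideal_gen (polyring N) Gs"
proof -
  let ?I = "ideal_gen (polyring N) Gs" and ?R = "\<Sum>j\<in>K - {k, m}. l j"
  have sum_K: "(\<Sum>j\<in>K. l j) = l k + (l m + ?R)"
  proof -
    have "(\<Sum>j\<in>K - {k}. l j) = l m + (\<Sum>j\<in>K - {k} - {m}. l j)"
      using assms(1-4) by (intro sum.remove) auto
    moreover have "K - {k} - {m} = K - {k, m}" by blast
    ultimately show ?thesis using assms(1,2) by (simp add: sum.remove)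
  qed
  have lk: "l k \<in> polyring N" "l k * l k \<in> ?I" and lm: "l m \<in> polyring N" "l m * l m \<in> ?I"
    using square_zero assms(2,3) by auto
  have R: "?R \<in> polyring N" using square_zero by (intro polyring_sum) auto
  have "card (K - {k, m}) = r" using assms(1-5) by (simp add: card_Diff_subset)
  then have R_power: "?R ^ Suc r \<in> ?I"
    using square_zero_sum_power[of "K - {k, m}" l N Gs] square_zero assms(1) by auto
  have "l k * (\<Sum>j\<in>K. l j) ^ Suc r - of_nat (Suc r) * (l k * l m) * ?R ^ r
      = (l k * (l k + (l m + ?R)) ^ Suc r - l k * (l m + ?R) ^ Suc r)
        + l k * ((l m + ?R) ^ Suc r - ?R ^ Suc r - of_nat (Suc r) * l m * ?R ^ r)
        + l k * ?R ^ Suc r"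
    unfolding sum_K by (simp add: algebra_simps)
  also have "\<dots> \<in> ?I"
    by (intro ideal_gen.add ideal_gen.mult square_zero_times_power square_zero_binomial_power
        lk lm R R_power polyring_add)
  finally show ?thesis .
qed

lemma square_zero_sum_power_kernel:
  assumes "finite K" and "k \<in> K" and "m \<in> K" and "k \<noteq> m" and "card K = Suc (Suc r)"
    and "\<And>j. j \<in> K \<Longrightarrow> l j \<in> polyring N \<and> l j * l j \<in> ideal_gen (polyring N) Gs"
  shows "(l k - l m) * (\<Sum>j\<in>K. l j) ^ Suc r \<in> ideal_gen (polyring N) Gs"
proof -
  have "(l k - l m) * (\<Sum>j\<in>K. l j) ^ Suc r
      = (l k * (\<Sum>j\<in>K. l j) ^ Suc r - of_nat (Suc r) * (l k * l m) * (\<Sum>j\<in>K - {k, m}. l j) ^ r)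
        - (l m * (\<Sum>j\<in>K. l j) ^ Suc r - of_nat (Suc r) * (l m * l k) * (\<Sum>j\<in>K - {m, k}. l j) ^ r)"
    by (simp add: algebra_simps insert_commute)
  also have "\<dots> \<in> ideal_gen (polyring N) Gs"
    using assms by (intro ideal_gen_diff square_zero_times_sum_power) auto
  finally show ?thesis .
qed

section \<open>Pure complexes\<close>

locale pure_complex =
  fixes N d :: nat and Fs :: "nat set set"
  assumes facets: "\<And>F. F \<in> Fs \<Longrightarrow> F \<subseteq> {1..N} \<and> card F = d"
begin

lemma face_bounds:
  assumes "\<tau> \<in> gen_complex Fs"
  shows "\<tau> \<subseteq> {1..N} \<and> card \<tau> \<le> d"
proof -
  obtain F where F: "F \<in> Fs" "\<tau> \<subseteq> F" using assms unfolding gen_complex_def by blast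
  with facets have "finite F" using finite_subset by blast
  with F facets show ?thesis using card_mono by fastforce
qed

lemma finite_facet: "F \<in> Fs \<Longrightarrow> finite F"
  using facets finite_subset[of F "{1..N}"] by blast

lemma face_monomial_facet: "F \<in> Fs \<Longrightarrow> face_monomial (gen_complex Fs) (sqfree_exponent F)"
  using finite_facet unfolding face_monomial_def gen_complex_def
  by (auto simp: lookup_sqfree_exponent keys_sqfree_exponent)

lemma face_extend:
  assumes "\<tau> \<in> gen_complex Fs" and "card \<tau> < d"
  shows "\<exists>i\<in>{1..N} - \<tau>. insert i \<tau> \<in> gen_complex Fs"
proof -
  obtain F where F: "F \<in> Fs" "\<tau> \<subseteq> F" using assms(1) unfolding gen_complex_def by blast
  with assms(2) facets have "\<tau> \<noteq> F" by auto
  then obtain i where "i \<in> F - \<tau>" using F(2) by blast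
  with F facets show ?thesis unfolding gen_complex_def by blast
qed

lemma mdeg_face_monomial:
  "face_monomial (gen_complex Fs) m \<Longrightarrow> mdeg m = card (keys m) \<and> card (keys m) \<le> d"
  unfolding face_monomial_def using face_bounds mdeg_sqfree by blast

lemma homog_above_in_ideal:
  assumes "d < e" and "g \<in> polyring N" and "homog e g"
  shows "g \<in> defining_ideal N (gen_complex Fs)"
proof (rule defining_idealI[OF assms(2)])
  fix m assume "m \<in> keys g"
  with assms(3) have "mdeg m = e" unfolding homog_def by blast
  with assms(1) show "\<not> face_monomial (gen_complex Fs) m"
    using mdeg_face_monomial by fastforce
qed

lemma xmon_facet_not_in_ideal:
  assumes "F \<in> Fs"
  shows "(xmon F :: 'k::comm_ring_1 mpoly) \<notin> defining_ideal N (gen_complex Fs)"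
  using lookup_defining_ideal_face_monomial[OF downward_closed_gen_complex _
      face_monomial_facet[OF assms]]
  by (force simp: xmon_eq_single finite_facet[OF assms])

lemma annihilated_by_vars_top_degree:
  fixes f :: "'k::comm_ring_1 mpoly"
  assumes "f \<in> polyring N"
    and annihilated: "\<And>i. i \<in> {1..N} \<Longrightarrow> var i * f \<in> defining_ideal N (gen_complex Fs)"
  shows "f - monomial_restrict (\<lambda>m. mdeg m = d) f \<in> defining_ideal N (gen_complex Fs)"
proof (rule defining_idealI)
  show "f - monomial_restrict (\<lambda>m. mdeg m = d) f \<in> polyring N"
    by (intro polyring_diff polyring_monomial_restrict assms(1))
next
  fix m assume m: "m \<in> keys (f - monomial_restrict (\<lambda>m. mdeg m = d) f)"
  then have "mdeg m \<noteq> d" and f_m: "lookup f m \<noteq> 0"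
    by (auto simp: in_keys_iff lookup_minus lookup_monomial_restrict split: if_splits)
  show "\<not> face_monomial (gen_complex Fs) m"
  proof
    assume face: "face_monomial (gen_complex Fs) m"
    with \<open>mdeg m \<noteq> d\<close> have "card (keys m) < d" using mdeg_face_monomial by fastforce
    with face obtain i where i: "i \<in> {1..N} - keys m" "insert i (keys m) \<in> gen_complex Fs"
      using face_extend unfolding face_monomial_def by blast
    then have "face_monomial (gen_complex Fs) (single i 1 + m)"
      using face unfolding face_monomial_def
      by (auto simp: keys_add_nat lookup_add lookup_single when_def in_keys_iff)
    then have "lookup (var i * f) (single i 1 + m) = 0"
      using i(1)
      by (intro lookup_defining_ideal_face_monomial[OF downward_closed_gen_complex annihilated]) auto
    with f_m show False using lookup_var_mult[of i f m] by simp
  qed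
qed

theorem level:
  assumes "Fs \<noteq> {}"
  shows "level_quot N (defining_ideal N (gen_complex Fs) :: 'k::comm_ring_1 mpoly set)"
proof -
  let ?I = "defining_ideal N (gen_complex Fs) :: 'k mpoly set"
  obtain F where F: "F \<in> Fs" using assms by blast
  then have "F \<subseteq> {1..N}" "card F = d" "finite F" using facets[OF F] finite_facet[OF F] by auto
  then have top_degree: "\<exists>g\<in>polyring N. homog d g \<and> g \<notin> ?I"
    using xmon_facet_not_in_ideal[OF F]
    by (intro bexI[of _ "xmon F"] conjI)
       (auto simp: xmon_eq_single keys_sqfree_exponent mdeg_sqfree_exponent
        intro!: polyring_single homog_single)
  have socle: "(\<forall>i\<in>{1..N}. var i * f \<in> ?I) \<longleftrightarrow> (\<exists>g\<in>polyring N. homog d g \<and> f - g \<in> ?I)"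
    if f: "f \<in> polyring N" for f
  proof
    assume "\<forall>i\<in>{1..N}. var i * f \<in> ?I"
    then show "\<exists>g\<in>polyring N. homog d g \<and> f - g \<in> ?I"
      using annihilated_by_vars_top_degree[OF f]
      by (intro bexI[of _ "monomial_restrict (\<lambda>m. mdeg m = d) f"] conjI homog_monomial_restrict_mdeg
          polyring_monomial_restrict f) auto
  next
    assume "\<exists>g\<in>polyring N. homog d g \<and> f - g \<in> ?I"
    then obtain g where g: "g \<in> polyring N" "homog d g" "f - g \<in> ?I" by blast
    show "\<forall>i\<in>{1..N}. var i * f \<in> ?I"
    proof
      fix i assume i: "i \<in> {1..N}"
      have "var i * g \<in> ?I"
        using g i by (intro homog_above_in_ideal[of "1 + d"] polyring_mult polyring_var homog_mult
            homog_var) auto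
      moreover have "var i * (f - g) \<in> ?I"
        using g i unfolding defining_ideal_def by (intro ideal_gen.mult polyring_var) auto
      moreover have "var i * f = var i * g + var i * (f - g)" by (simp add: algebra_simps)
      ultimately show "var i * f \<in> ?I" unfolding defining_ideal_def by (simp add: ideal_gen.add)
    qed
  qed
  show ?thesis
    unfolding level_quot_def using top_degree homog_above_in_ideal socle by blast
qed

lemma facet_monomial_in_span:
  fixes L f :: "'k::field mpoly"
  assumes F: "F \<in> Fs" and f: "f \<in> polyring N" "homog 1 f"
    and image: "single (sqfree_exponent F) 1 - L ^ j * f \<in> defining_ideal N (gen_complex Fs)"
  shows "single (sqfree_exponent F) 1
    \<in> mpoly_vs.span
        ((\<lambda>i. monomial_restrict (face_monomial (gen_complex Fs)) (L ^ j * var i)) ` {1..N})"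
proof -
  let ?face_part = "monomial_restrict (face_monomial (gen_complex Fs)) :: 'k mpoly \<Rightarrow> 'k mpoly"
  define c where "c i = lookup f (single i 1)" for i
  have f_eq: "f = (\<Sum>i\<in>{1..N}. single 0 (c i) * var i)"
    unfolding c_def var_def using linear_form_eq_sum_vars[OF f] by (simp add: mult_single)
  have "single (sqfree_exponent F) 1 = ?face_part (single (sqfree_exponent F) 1)"
    using face_monomial_facet[OF F] by (simp add: monomial_restrict_single)
  also have "\<dots> = ?face_part (L ^ j * f)"
    using monomial_restrict_face_monomial_ideal[OF downward_closed_gen_complex image]
    by (simp add: monomial_restrict_diff)
  also have "\<dots> = (\<Sum>i\<in>{1..N}. single 0 (c i) * ?face_part (L ^ j * var i))"
    unfolding f_eq sum_distrib_left monomial_restrict_sum mult.left_commute[of "L ^ j"]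
    by (simp add: monomial_restrict_const_mult)
  also have "\<dots> \<in> mpoly_vs.span ((\<lambda>i. ?face_part (L ^ j * var i)) ` {1..N})"
    by (intro mpoly_vs.span_sum mpoly_vs.span_scale mpoly_vs.span_base) auto
  finally show ?thesis .
qed

theorem not_surjective:
  fixes L :: "'k::field mpoly"
  assumes "finite Fs" and "N < card Fs" and "d = 1 + j"
  shows "\<not> (\<forall>g\<in>polyring N. homog (1 + j) g \<longrightarrow>
      (\<exists>f\<in>polyring N. homog 1 f \<and> g - L ^ j * f \<in> defining_ideal N (gen_complex Fs)))"
proof
  assume surjective: "\<forall>g\<in>polyring N. homog (1 + j) g \<longrightarrow>
      (\<exists>f\<in>polyring N. homog 1 f \<and> g - L ^ j * f \<in> defining_ideal N (gen_complex Fs))"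
  define T
    where "T = (\<lambda>i. monomial_restrict (face_monomial (gen_complex Fs)) (L ^ j * var i)) ` {1..N}"
  define S where "S = (\<lambda>m. single m (1::'k)) ` sqfree_exponent ` Fs"
  have "card T \<le> N"
    unfolding T_def using card_image_le[of "{1..N}"] by fastforce
  moreover have "card S = card Fs"
  proof -
    have "inj_on sqfree_exponent Fs"
      by (rule inj_on_inverseI[of _ keys]) (simp add: keys_sqfree_exponent finite_facet)
    moreover have "inj (\<lambda>m. single m (1::'k))" by (rule injI) simp
    ultimately show ?thesis
      unfolding S_def by (metis card_image inj_on_subset subset_UNIV)
  qed
  moreover have "S \<subseteq> mpoly_vs.span T"
  proof
    fix v assume "v \<in> S"
    then obtain F where F: "F \<in> Fs" and v: "v = single (sqfree_exponent F) 1"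
      unfolding S_def by blast
    have "v \<in> polyring N" "homog (1 + j) v"
      unfolding v using facets[OF F] finite_facet[OF F] assms(3)
      by (auto simp: keys_sqfree_exponent mdeg_sqfree_exponent intro!: polyring_single homog_single)
    with surjective obtain f where "f \<in> polyring N" "homog 1 f"
      "v - L ^ j * f \<in> defining_ideal N (gen_complex Fs)"
      by blast
    with F show "v \<in> mpoly_vs.span T"
      unfolding v T_def by (rule facet_monomial_in_span)
  qed
  then have "card S \<le> card T"
    using mpoly_vs.independent_span_bound[of T S] independent_monomials T_def S_def by auto
  ultimately show False using assms(2) by linarith
qed

end

section \<open>Linear forms split along the whiskers\<close>

lemma sum_atLeastAtMost_double:
  "(\<Sum>i=1..2 * n. g i) = (\<Sum>k=1..(n::nat). g k + g (n + k))"
proof -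
  have "(\<Sum>i=1..2 * n. g i) = (\<Sum>i=1..n. g i) + (\<Sum>i=1 + n..n + n. g i)"
    using sum.ub_add_nat[of 1 n g n] by (simp add: mult_2)
  also have "(\<Sum>i=1 + n..n + n. g i) = (\<Sum>k=1..n. g (n + k))"
    using sum.shift_bounds_cl_nat_ivl[of g 1 n n] by (simp add: add.commute)
  finally show ?thesis by (simp add: sum.distrib)
qed

definition pair_form :: "(nat \<Rightarrow> 'k::comm_ring_1) \<Rightarrow> nat \<Rightarrow> nat \<Rightarrow> 'k mpoly" where
  "pair_form c n k = single (single k 1) (c k) + single (single (n + k) 1) (c (n + k))"

lemma linear_form_eq_sum_pair_forms:
  assumes "L \<in> polyring (2 * n)" and "homog 1 L"
  shows "L = (\<Sum>k=1..n. pair_form (\<lambda>i. lookup L (single i 1)) n k)"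
  using linear_form_eq_sum_vars[OF assms] unfolding pair_form_def sum_atLeastAtMost_double .

lemma lookup_pair_form:
  "0 < n \<Longrightarrow> lookup (pair_form c n k) (single i 1) = (if i = k \<or> i = n + k then c i else 0)"
  unfolding pair_form_def by (auto simp: lookup_add lookup_single when_def)

lemma polyring_pair_form: "k \<in> {1..n} \<Longrightarrow> pair_form c n k \<in> polyring (2 * n)"
  unfolding pair_form_def by (intro polyring_add polyring_single) auto

lemma homog_pair_form: "homog 1 (pair_form c n k)"
  unfolding pair_form_def by (intro homog_add homog_single) simp_all

lemma pair_form_square_in_ideal:
  assumes "k \<in> {1..n}" and "{k, n + k} \<notin> \<Delta>"
  shows "pair_form c n k * pair_form c n k \<in> defining_ideal (2 * n) \<Delta>"
proof -
  let ?a = "single k (1::nat)" and ?b = "single (n + k) (1::nat)"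
  have not_face: "\<not> face_monomial \<Delta> (?a + ?a)" "\<not> face_monomial \<Delta> (?b + ?b)"
    "\<not> face_monomial \<Delta> (?a + ?b)" "\<not> face_monomial \<Delta> (?b + ?a)"
    using assms(2) by (auto simp: face_monomial_def lookup_add keys_add_nat insert_commute
        intro: exI[of _ k] exI[of _ "n + k"])
  have "pair_form c n k * pair_form c n k = single (?a + ?a) (c k * c k)
      + single (?a + ?b) (c k * c (n + k)) + single (?b + ?a) (c (n + k) * c k)
      + single (?b + ?b) (c (n + k) * c (n + k))"
    unfolding pair_form_def by (simp add: algebra_simps mult_single)
  also have "\<dots> \<in> defining_ideal (2 * n) \<Delta>"
    using assms(1) unfolding defining_ideal_def
    by (intro ideal_gen.add single_in_defining_ideal[unfolded defining_ideal_def] not_face)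
       (auto simp: keys_add_nat)
  finally show ?thesis .
qed

lemma pair_form_diff_times_power_in_ideal:
  assumes "2 \<le> n" and pairs: "\<And>k. k \<in> {1..n} \<Longrightarrow> {k, n + k} \<notin> \<Delta>"
    and "k \<in> {1..n}" and "m \<in> {1..n}" and "k \<noteq> m"
  shows "(pair_form c n k - pair_form c n m) * (\<Sum>j=1..n. pair_form c n j) ^ (n - 1)
    \<in> defining_ideal (2 * n) \<Delta>"
proof -
  have card: "card {1..n} = Suc (Suc (n - 2))" using assms(1) by simp
  have "pair_form c n j \<in> polyring (2 * n)
      \<and> pair_form c n j * pair_form c n j \<in> defining_ideal (2 * n) \<Delta>"
    if "j \<in> {1..n}" for j
    using that pairs[OF that] by (simp add: polyring_pair_form pair_form_square_in_ideal)
  then have "(pair_form c n k - pair_form c n m) * (\<Sum>j=1..n. pair_form c n j) ^ Suc (n - 2)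
      \<in> defining_ideal (2 * n) \<Delta>"
    unfolding defining_ideal_def
    by (rule square_zero_sum_power_kernel[OF finite_atLeastAtMost assms(3-5) card])
  moreover have "Suc (n - 2) = n - 1" using assms(1) by simp
  ultimately show ?thesis by simp
qed

lemma var_not_in_defining_ideal:
  assumes "downward_closed \<Delta>" and "{i} \<in> \<Delta>"
  shows "(var i :: 'k::comm_ring_1 mpoly) \<notin> defining_ideal N \<Delta>"
proof
  assume "var i \<in> defining_ideal N \<Delta>"
  moreover have "face_monomial \<Delta> (single i 1)"
    using assms(2) by (simp add: face_monomial_def lookup_single when_def)
  ultimately show False
    using lookup_defining_ideal_face_monomial[OF assms(1)] by (fastforce simp: var_def)
qed

theorem not_injective:
  fixes L :: "'k::comm_ring_1 mpoly"
  assumes "downward_closed \<Delta>" and "2 \<le> n"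
    and pairs: "\<And>k. k \<in> {1..n} \<Longrightarrow> {k, n + k} \<notin> \<Delta>"
    and vertices: "\<And>i. i \<in> {1..2 * n} \<Longrightarrow> {i} \<in> \<Delta>"
    and L: "L \<in> polyring (2 * n)" "homog 1 L"
  shows "\<exists>f\<in>polyring (2 * n). homog 1 f \<and>
    L ^ (n - 1) * f \<in> defining_ideal (2 * n) \<Delta> \<and> f \<notin> defining_ideal (2 * n) \<Delta>"
proof -
  let ?I = "defining_ideal (2 * n) \<Delta> :: 'k mpoly set"
  define c where "c = (\<lambda>i. lookup L (single i 1))"
  have L_eq: "L = (\<Sum>j=1..n. pair_form c n j)"
    unfolding c_def by (rule linear_form_eq_sum_pair_forms[OF L])
  show ?thesis
  proof (cases "\<forall>i\<in>{1..2 * n}. c i = 0")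
    case True
    then have "L = 0" using linear_form_eq_sum_vars[OF L] by (simp add: c_def)
    then have "L ^ (n - 1) * var 1 \<in> ?I"
      using assms(2) by (simp add: power_0_left defining_ideal_def ideal_gen.zero)
    moreover have "var 1 \<notin> ?I"
      using vertices[of 1] assms(2) by (intro var_not_in_defining_ideal[OF assms(1)]) auto
    moreover have "var 1 \<in> polyring (2 * n)" using assms(2) by (intro polyring_var) auto
    ultimately show ?thesis using homog_var by blast
  next
    case False
    then obtain i where i: "i \<in> {1..2 * n}" "c i \<noteq> 0" by blast
    define k where "k = (if i \<le> n then i else i - n)"
    define m where "m = (if k = 1 then 2 else (1::nat))"
    have k: "k \<in> {1..n}" "i = k \<or> i = n + k" and m: "m \<in> {1..n}" "k \<noteq> m"
      using i(1) assms(2) unfolding k_def m_def by auto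
    define f where "f = pair_form c n k - pair_form c n m"
    have "lookup f (single i 1) = c i"
      using k m assms(2) lookup_pair_form[of n c k i] lookup_pair_form[of n c m i]
      by (auto simp: f_def lookup_minus)
    moreover have "face_monomial \<Delta> (single i 1)"
      using vertices[OF i(1)] by (simp add: face_monomial_def lookup_single when_def)
    ultimately have "f \<notin> ?I"
      using i(2) lookup_defining_ideal_face_monomial[OF assms(1)] by metis
    moreover have "L ^ (n - 1) * f \<in> ?I"
      unfolding L_eq f_def using pair_form_diff_times_power_in_ideal[OF assms(2) pairs k(1) m]
      by (simp add: mult.commute)
    moreover have "f \<in> polyring (2 * n)"
      unfolding f_def using k(1) m(1) by (intro polyring_diff polyring_pair_form)
    moreover have "homog 1 f"
      unfolding f_def by (intro homog_diff homog_pair_form)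
    ultimately show ?thesis by blast
  qed
qed

section \<open>Whiskered graphs\<close>

definition whisker_cover :: "nat \<Rightarrow> nat set \<Rightarrow> nat set" where
  "whisker_cover n S = S \<union> (\<lambda>k. n + k) ` ({1..n} - S)"

lemma whisker_edge: "k \<in> {1..n} \<Longrightarrow> {k, n + k} \<in> whisker_edges n E"
  unfolding whisker_edges_def by blast

lemma edge_subset: "simple_graph V E \<Longrightarrow> e \<in> E \<Longrightarrow> e \<subseteq> V"
  unfolding simple_graph_def by fastforce

lemma min_vertex_cover_whisker_iff:
  assumes G: "simple_graph {1..n} E"
    and C: "min_vertex_cover {1..2 * n} (whisker_edges n E) C" and k: "k \<in> {1..n}"
  shows "k \<in> C \<longleftrightarrow> n + k \<notin> C"
proof -
  have cover: "vertex_cover {1..2 * n} (whisker_edges n E) C"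
    and minimal: "\<And>D. D \<subset> C \<Longrightarrow> \<not> vertex_cover {1..2 * n} (whisker_edges n E) D"
    using C unfolding min_vertex_cover_def by auto
  have "{k, n + k} \<inter> C \<noteq> {}"
    using cover whisker_edge[OF k] unfolding vertex_cover_def by blast
  moreover have "\<not> (k \<in> C \<and> n + k \<in> C)"
  proof
    assume both: "k \<in> C \<and> n + k \<in> C"
    have "vertex_cover {1..2 * n} (whisker_edges n E) (C - {n + k})"
      unfolding vertex_cover_def
    proof (intro conjI ballI)
      show "C - {n + k} \<subseteq> {1..2 * n}" using cover unfolding vertex_cover_def by blast
    next
      fix e assume e: "e \<in> whisker_edges n E"
      then have meets: "e \<inter> C \<noteq> {}" using cover unfolding vertex_cover_def by blast
      have "n + k \<notin> e \<or> k \<in> e"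
      proof (cases "e \<in> E")
        case True
        then have "e \<subseteq> {1..n}" by (rule edge_subset[OF G])
        with k show ?thesis by auto
      next
        case False
        with e obtain j where "j \<in> {1..n}" "e = {j, n + j}" unfolding whisker_edges_def by blast
        with k show ?thesis by auto
      qed
      moreover have "k \<noteq> n + k" using k by simp
      ultimately show "e \<inter> (C - {n + k}) \<noteq> {}" using meets both by blast
    qed
    moreover have "C - {n + k} \<subset> C" using both by blast
    ultimately show False using minimal by blast
  qed
  ultimately show ?thesis by blast
qed

lemma min_vertex_cover_whisker_eq:
  assumes "simple_graph {1..n} E" and C: "min_vertex_cover {1..2 * n} (whisker_edges n E) C"
  shows "C = whisker_cover n (C \<inter> {1..n})"
proof -
  have "C \<subseteq> {1..2 * n}" using C unfolding min_vertex_cover_def vertex_cover_def by blast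
  then have "x \<in> (\<lambda>k. n + k) ` ({1..n} - C)" if "x \<in> C" "x \<notin> {1..n}" for x
  proof -
    have "x - n \<in> {1..n}" "n + (x - n) = x" using that \<open>C \<subseteq> {1..2 * n}\<close> by auto
    with that(1) show ?thesis
      using min_vertex_cover_whisker_iff[OF assms, of "x - n"]
      by (intro image_eqI[of _ _ "x - n"]) auto
  qed
  moreover have "n + k \<in> C" if "k \<in> {1..n} - C" for k
    using that min_vertex_cover_whisker_iff[OF assms, of k] by blast
  ultimately show ?thesis unfolding whisker_cover_def by blast
qed

lemma card_whisker_cover: "S \<subseteq> {1..n} \<Longrightarrow> card (whisker_cover n S) = n"
proof -
  assume S: "S \<subseteq> {1..n}"
  have "card ((\<lambda>k. n + k) ` ({1..n} - S)) = card ({1..n} - S)"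
    by (rule card_image) simp
  moreover have "S \<inter> (\<lambda>k. n + k) ` ({1..n} - S) = {}" using S by auto
  moreover have "finite S" using S finite_subset by blast
  ultimately have "card (whisker_cover n S) = card S + card ({1..n} - S)"
    unfolding whisker_cover_def by (simp add: card_Un_disjoint)
  also have "\<dots> = n" using S \<open>finite S\<close> card_mono[OF _ S] by (simp add: card_Diff_subset)
  finally show ?thesis .
qed

lemma whisker_cover_inter: "S \<subseteq> {1..n} \<Longrightarrow> whisker_cover n S \<inter> {1..n} = S"
  unfolding whisker_cover_def by auto

lemma min_vertex_cover_whisker_cover:
  assumes S: "vertex_cover {1..n} E S"
  shows "min_vertex_cover {1..2 * n} (whisker_edges n E) (whisker_cover n S)"
proof -
  have sub: "S \<subseteq> {1..n}" and meets: "\<And>e. e \<in> E \<Longrightarrow> e \<inter> S \<noteq> {}"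
    using S unfolding vertex_cover_def by auto
  show ?thesis
    unfolding min_vertex_cover_def
  proof (intro conjI allI impI)
    show "vertex_cover {1..2 * n} (whisker_edges n E) (whisker_cover n S)"
      unfolding vertex_cover_def whisker_edges_def whisker_cover_def
      using sub meets by (fastforce split: if_splits)
  next
    fix D assume D: "D \<subset> whisker_cover n S"
    then obtain x where x: "x \<in> whisker_cover n S" "x \<notin> D" by blast
    have "\<exists>k\<in>{1..n}. {k, n + k} \<inter> whisker_cover n S \<subseteq> {x}"
    proof (cases "x \<in> S")
      case True
      with sub have x_low: "x \<in> {1..n}" by blast
      then have "n + x \<notin> {1..n}" by simp
      with sub have "n + x \<notin> S" by blast
      with True x_low show ?thesis unfolding whisker_cover_def by (intro bexI[of _ x]) auto
    next
      case False
      with x(1) obtain k where "k \<in> {1..n} - S" "x = n + k" unfolding whisker_cover_def by blast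
      with sub show ?thesis unfolding whisker_cover_def by (intro bexI[of _ k]) auto
    qed
    then obtain k where k: "k \<in> {1..n}" "{k, n + k} \<inter> whisker_cover n S \<subseteq> {x}" by blast
    with x(2) D have "{k, n + k} \<inter> D = {}" by blast
    then show "\<not> vertex_cover {1..2 * n} (whisker_edges n E) D"
      using whisker_edge[OF k(1)] unfolding vertex_cover_def by blast
  qed
qed

lemma vertex_cover_mono: "vertex_cover V E A \<Longrightarrow> A \<subseteq> S \<Longrightarrow> S \<subseteq> V \<Longrightarrow> vertex_cover V E S"
  unfolding vertex_cover_def by blast

lemma card_supersets:
  assumes "finite V" and "A \<subseteq> V"
  shows "card {S. A \<subseteq> S \<and> S \<subseteq> V} = 2 ^ card (V - A)"
proof -
  have "bij_betw (\<lambda>X. A \<union> X) (Pow (V - A)) {S. A \<subseteq> S \<and> S \<subseteq> V}"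
    by (rule bij_betw_byWitness[where f' = "\<lambda>S. S - A"]) (use assms(2) in auto)
  then have "card {S. A \<subseteq> S \<and> S \<subseteq> V} = card (Pow (V - A))"
    by (simp add: bij_betw_same_card)
  with assms(1) show ?thesis by (simp add: card_Pow)
qed

lemma two_power_add_ge: "5 \<le> a + b \<Longrightarrow> 2 * (a + b) + 2 \<le> 2 ^ a + (2::nat) ^ b"
proof -
  have linear: "2 * a \<le> (2::nat) ^ a" for a
  proof (cases a)
    case (Suc b)
    have "2 * Suc b \<le> 2 * 2 ^ b" by (rule mult_le_mono2) (simp add: Suc_le_eq)
    with Suc show ?thesis by simp
  qed simp
  have shifted: "3 \<le> a \<Longrightarrow> 2 * a + 2 \<le> (2::nat) ^ a" for a
    by (induction a rule: nat_induct_at_least) simp_all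
  assume "5 \<le> a + b"
  then have "3 \<le> a \<or> 3 \<le> b" by linarith
  then show ?thesis using linear[of a] linear[of b] shifted[of a] shifted[of b] by auto
qed

lemma bipartite_vertex_covers:
  assumes G: "simple_graph V E" and "bipartite V E"
  obtains A where "A \<subseteq> V" "vertex_cover V E A" "vertex_cover V E (V - A)"
proof -
  obtain A where A: "A \<subseteq> V" and one: "\<And>e. e \<in> E \<Longrightarrow> card (e \<inter> A) = 1"
    using assms(2) unfolding bipartite_def by blast
  have "vertex_cover V E A"
    unfolding vertex_cover_def using A one by (metis card.empty zero_neq_one)
  moreover have "vertex_cover V E (V - A)"
    unfolding vertex_cover_def
  proof (intro conjI ballI)
    fix e assume e: "e \<in> E"
    then obtain a b where ab: "e = {a, b}" "a \<noteq> b" "a \<in> V" "b \<in> V"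
      using G unfolding simple_graph_def by blast
    show "e \<inter> (V - A) \<noteq> {}"
    proof
      assume "e \<inter> (V - A) = {}"
      with ab have "e \<inter> A = {a, b}" by auto
      with ab one[OF e] show False by simp
    qed
  qed simp
  ultimately show ?thesis using A that by blast
qed

lemma card_vertex_covers_ge:
  assumes "finite V" and "A \<subseteq> V" and "vertex_cover V E A" and "vertex_cover V E (V - A)"
  shows "2 ^ card A + 2 ^ card (V - A) \<le> card {S. vertex_cover V E S} + 1"
proof -
  let ?X = "{S. A \<subseteq> S \<and> S \<subseteq> V}" and ?Y = "{S. V - A \<subseteq> S \<and> S \<subseteq> V}"
  have "?X \<inter> ?Y = {V}" using assms(2) by blast
  moreover have "V - (V - A) = A" using assms(2) by blast
  ultimately have "card (?X \<union> ?Y) + 1 = 2 ^ card (V - A) + 2 ^ card A"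
    using card_Un_Int[of ?X ?Y] card_supersets[of V A] card_supersets[of V "V - A"] assms(1,2)
    by simp
  moreover have "finite {S. vertex_cover V E S}"
    by (rule finite_subset[of _ "Pow V"]) (use assms(1) in \<open>auto simp: vertex_cover_def\<close>)
  then have "card (?X \<union> ?Y) \<le> card {S. vertex_cover V E S}"
    by (rule card_mono) (use assms(3,4) vertex_cover_mono in blast)
  ultimately show ?thesis by linarith
qed

lemma card_vertex_covers_bipartite:
  assumes "simple_graph {1..n} E" and "bipartite {1..n} E" and "5 \<le> n"
  shows "2 * n + 1 \<le> card {S. vertex_cover {1..n} E S}"
proof -
  obtain A where A: "A \<subseteq> {1..n}" "vertex_cover {1..n} E A" "vertex_cover {1..n} E ({1..n} - A)"
    using bipartite_vertex_covers[OF assms(1,2)] by blast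
  then have "card A + card ({1..n} - A) = n"
    using card_Diff_subset[of A "{1..n}"] card_mono[OF _ A(1)] finite_subset[OF A(1)] by simp
  then show ?thesis
    using card_vertex_covers_ge[OF _ A] two_power_add_ge[of "card A" "card ({1..n} - A)"] assms(3)
    by simp
qed

lemma finite_cover_ideal_supports: "finite V \<Longrightarrow> finite (cover_ideal_supports V E)"
  unfolding cover_ideal_supports_def min_vertex_cover_def vertex_cover_def
  by (rule finite_subset[of _ "Pow V"]) auto

lemma card_cover_ideal_supports_whisker:
  assumes "simple_graph {1..n} E" and "bipartite {1..n} E" and "5 \<le> n"
  shows "2 * n + 1 \<le> card (cover_ideal_supports {1..2 * n} (whisker_edges n E))"
proof -
  let ?covers = "{S. vertex_cover {1..n} E S}"
  have "inj_on (whisker_cover n) ?covers"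
    by (rule inj_on_inverseI[of _ "\<lambda>C. C \<inter> {1..n}"])
       (use whisker_cover_inter in \<open>auto simp: vertex_cover_def\<close>)
  then have "card ?covers = card (whisker_cover n ` ?covers)" by (rule card_image[symmetric])
  also have "\<dots> \<le> card (cover_ideal_supports {1..2 * n} (whisker_edges n E))"
    by (intro card_mono finite_cover_ideal_supports)
       (use min_vertex_cover_whisker_cover in \<open>auto simp: cover_ideal_supports_def\<close>)
  finally show ?thesis using card_vertex_covers_bipartite[OF assms] by linarith
qed

lemma pure_complex_whisker:
  assumes "simple_graph {1..n} E"
  shows "pure_complex (2 * n) n (cover_ideal_supports {1..2 * n} (whisker_edges n E))"
proof
  fix C assume "C \<in> cover_ideal_supports {1..2 * n} (whisker_edges n E)"
  then have C: "min_vertex_cover {1..2 * n} (whisker_edges n E) C"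
    unfolding cover_ideal_supports_def by simp
  then have "card C = n"
    using min_vertex_cover_whisker_eq[OF assms C] card_whisker_cover[of "C \<inter> {1..n}" n] by simp
  moreover have "C \<subseteq> {1..2 * n}" using C unfolding min_vertex_cover_def vertex_cover_def by blast
  ultimately show "C \<subseteq> {1..2 * n} \<and> card C = n" by simp
qed

lemma whisker_pair_not_face:
  assumes "simple_graph {1..n} E" and "k \<in> {1..n}"
  shows "{k, n + k} \<notin> gen_complex (cover_ideal_supports {1..2 * n} (whisker_edges n E))"
  using min_vertex_cover_whisker_iff[OF assms(1) _ assms(2)]
  unfolding gen_complex_def cover_ideal_supports_def by blast

lemma whisker_vertex_face:
  assumes G: "simple_graph {1..n} E" and i: "i \<in> {1..2 * n}"
  shows "{i} \<in> gen_complex (cover_ideal_supports {1..2 * n} (whisker_edges n E))"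
proof -
  have "\<exists>S. vertex_cover {1..n} E S \<and> i \<in> whisker_cover n S"
  proof (cases "i \<le> n")
    case True
    have "vertex_cover {1..n} E {1..n}"
      using G unfolding vertex_cover_def simple_graph_def by fastforce
    with True i show ?thesis unfolding whisker_cover_def by auto
  next
    case False
    then obtain k where k: "k \<in> {1..n}" "i = n + k" using i by (intro that[of "i - n"]) auto
    have "vertex_cover {1..n} E ({1..n} - {k})"
      unfolding vertex_cover_def
    proof (intro conjI ballI)
      fix e assume "e \<in> E"
      then obtain a b where "e = {a, b}" "a \<noteq> b" "a \<in> {1..n}" "b \<in> {1..n}"
        using G unfolding simple_graph_def by blast
      then show "e \<inter> ({1..n} - {k}) \<noteq> {}" by auto
    qed simp
    with k show ?thesis unfolding whisker_cover_def by auto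
  qed
  then show ?thesis
    using min_vertex_cover_whisker_cover unfolding gen_complex_def cover_ideal_supports_def by blast
qed

theorem corollary5p13:
  fixes n :: nat and E :: "nat set set"
  assumes "n \<ge> 5"
    and "simple_graph {1..n} E"
    and "bipartite {1..n} E"
  defines "\<Delta> \<equiv> gen_complex (cover_ideal_supports {1..2*n} (whisker_edges n E))"
  shows "level_quot (2*n) (defining_ideal (2*n) \<Delta> :: 'k::field_char_0 mpoly set)
     \<and> \<not> strong_lefschetz (2*n) (defining_ideal (2*n) \<Delta> :: 'k mpoly set)"
proof -
  let ?Fs = "cover_ideal_supports {1..2 * n} (whisker_edges n E)"
    and ?I = "defining_ideal (2 * n) \<Delta> :: 'k mpoly set"
  interpret pure_complex "2 * n" n ?Fs by (rule pure_complex_whisker[OF assms(2)])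
  have many_facets: "2 * n < card ?Fs"
    using card_cover_ideal_supports_whisker[OF assms(2,3,1)] by simp
  have "\<not> full_rank_mult (2 * n) ?I L 1 (n - 1)"
    if L: "L \<in> polyring (2 * n)" "homog 1 L" for L
  proof -
    have "\<exists>f\<in>polyring (2 * n). homog 1 f \<and> L ^ (n - 1) * f \<in> ?I \<and> f \<notin> ?I"
      unfolding \<Delta>_def
      using assms(1) whisker_pair_not_face[OF assms(2)] whisker_vertex_face[OF assms(2)]
      by (intro not_injective downward_closed_gen_complex L) auto
    moreover have "\<not> (\<forall>g\<in>polyring (2 * n). homog (1 + (n - 1)) g \<longrightarrow>
        (\<exists>f\<in>polyring (2 * n). homog 1 f \<and> g - L ^ (n - 1) * f \<in> ?I))"
      unfolding \<Delta>_def using assms(1) many_facets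
      by (intro not_surjective finite_cover_ideal_supports) auto
    ultimately show ?thesis unfolding full_rank_mult_def by blast
  qed
  moreover have "?Fs \<noteq> {}" using many_facets by auto
  ultimately show ?thesis
    unfolding strong_lefschetz_def \<Delta>_def using level by blast
qed

end
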